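(* Let $A$ be a non-empty set, $I$ a non-empty index set, $\{V_i\}_{i\in I}\subseteq\mathcal R(A)$, $E$ a fuzzy equivalence on $A$, and $(A/E,I,V_i^{A/E})$ the quotient fuzzy relational system of $(A,I,V_i)$ with respect to $E$. Let $E^\natural\in\mathcal R(A,A/E)$ be defined by $E^\natural(a_1,E_{a_2})=E(a_1,a_2)$. The following are equivalent: (i) $E$ is a solution to $WL^{1\text{-}4}(A,I,V_i)$; (ii) $E^\natural$ is a solution to $WL^{2\text{-}3}(A,A/E,I,V_i,V_i^{A/E})$; (iii) $E^\natural$ is a solution to $WL^{2\text{-}5}(A,A/E,I,V_i,V_i^{A/E})$.
   Context: $\mathcal L=(L,\wedge,\vee,\otimes,\to,0,1)$ is a complete residuated lattice. For non-empty sets $X,Y$, $\mathcal R(X,Y)$ is the set of fuzzy relations $X\times Y\to L$, $\mathcal R(X)=\mathcal R(X,X)$, ordered pointwise; $R^{-1}(y,x)=R(x,y)$; $(R\circ S)(x,t)=\bigvee_{y}R(x,y)\otimes S(y,t)$. A fuzzy equivalence $E$ on $A$ is reflexive ($E(a,a)=1$), symmetric and transitive ($E(a,b)\otimes E(b,c)\le E(a,c)$). $E_a(x)=E(a,x)$, $A/E=\{E_a:a\in A\}$, and $V_i^{A/E}(E_{a_1},E_{a_2})=(E\circ V_i\circ E)(a_1,a_2)$ (well defined). $WL^{1\text{-}4}(A,I,V_i)$ (unknown $U\in\mathcal R(A)$): $U\circ V_i\le V_i\circ U$ and $U^{-1}\circ V_i\le V_i\circ U^{-1}$ for all $i\in I$.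 For $\{W_i\}\subseteq\mathcal R(Q)$ and unknown $U\in\mathcal R(P,Q)$: $WL^{2\text{-}3}(P,Q,I,V_i,W_i)$: $U^{-1}\circ V_i\le W_i\circ U^{-1}$ and $U\circ W_i\le V_i\circ U$ for all $i\in I$; $WL^{2\text{-}5}(P,Q,I,V_i,W_i)$: $V_i\circ U=U\circ W_i$ for all $i\in I$. *)

theory Defs
  imports Main
begin

text \<open>Complete residuated lattice: the carrier is a type 'l of class complete_lattice
  (0 = bot, 1 = top), with multiplication m and residuum r.\<close>
definition complete_residuated_lattice ::
  "('l::complete_lattice \<Rightarrow> 'l \<Rightarrow> 'l) \<Rightarrow> ('l \<Rightarrow> 'l \<Rightarrow> 'l) \<Rightarrow> bool" where
  "complete_residuated_lattice m r \<longleftrightarrow>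
     (\<forall>x y z. m (m x y) z = m x (m y z)) \<and>
     (\<forall>x y. m x y = m y x) \<and>
     (\<forall>x. m x top = x) \<and>
     (\<forall>x y z. m x y \<le> z \<longleftrightarrow> x \<le> r y z)"

definition rcomp :: "('l::complete_lattice \<Rightarrow> 'l \<Rightarrow> 'l) \<Rightarrow> 'b set \<Rightarrow>
    ('a \<Rightarrow> 'b \<Rightarrow> 'l) \<Rightarrow> ('b \<Rightarrow> 'c \<Rightarrow> 'l) \<Rightarrow> 'a \<Rightarrow> 'c \<Rightarrow> 'l" where
  "rcomp m Y R S = (\<lambda>x t. SUP y\<in>Y. m (R x y) (S y t))"

definition rinv :: "('a \<Rightarrow> 'b \<Rightarrow> 'l) \<Rightarrow> 'b \<Rightarrow> 'a \<Rightarrow> 'l" where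
  "rinv R = (\<lambda>y x. R x y)"

definition rle :: "'a set \<Rightarrow> 'b set \<Rightarrow> ('a \<Rightarrow> 'b \<Rightarrow> 'l::order) \<Rightarrow> ('a \<Rightarrow> 'b \<Rightarrow> 'l) \<Rightarrow> bool" where
  "rle X Y R S \<longleftrightarrow> (\<forall>x\<in>X. \<forall>y\<in>Y. R x y \<le> S x y)"

definition fuzzy_equiv :: "('l::complete_lattice \<Rightarrow> 'l \<Rightarrow> 'l) \<Rightarrow> 'a set \<Rightarrow> ('a \<Rightarrow> 'a \<Rightarrow> 'l) \<Rightarrow> bool" where
  "fuzzy_equiv m A E \<longleftrightarrow>
     (\<forall>a\<in>A. E a a = top) \<and>
     (\<forall>a\<in>A. \<forall>b\<in>A. E a b = E b a) \<and>
     (\<forall>a\<in>A. \<forall>b\<in>A. \<forall>c\<in>A. m (E a b) (E b c) \<le> E a c)"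

definition eclass :: "'a set \<Rightarrow> ('a \<Rightarrow> 'a \<Rightarrow> 'l::complete_lattice) \<Rightarrow> 'a \<Rightarrow> 'a \<Rightarrow> 'l" where
  "eclass A E a = (\<lambda>x. if x \<in> A then E a x else bot)"

definition quot :: "'a set \<Rightarrow> ('a \<Rightarrow> 'a \<Rightarrow> 'l::complete_lattice) \<Rightarrow> ('a \<Rightarrow> 'l) set" where
  "quot A E = eclass A E ` A"

definition crep :: "'a set \<Rightarrow> ('a \<Rightarrow> 'a \<Rightarrow> 'l::complete_lattice) \<Rightarrow> ('a \<Rightarrow> 'l) \<Rightarrow> 'a" where
  "crep A E q = (SOME a. a \<in> A \<and> q = eclass A E a)"

definition quot_rel :: "('l::complete_lattice \<Rightarrow> 'l \<Rightarrow> 'l) \<Rightarrow> 'a set \<Rightarrow> ('a \<Rightarrow> 'a \<Rightarrow> 'l)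
    \<Rightarrow> ('a \<Rightarrow> 'a \<Rightarrow> 'l) \<Rightarrow> ('a \<Rightarrow> 'l) \<Rightarrow> ('a \<Rightarrow> 'l) \<Rightarrow> 'l" where
  "quot_rel m A E V q1 q2 = rcomp m A (rcomp m A E V) E (crep A E q1) (crep A E q2)"

definition enat :: "'a set \<Rightarrow> ('a \<Rightarrow> 'a \<Rightarrow> 'l::complete_lattice) \<Rightarrow> 'a \<Rightarrow> ('a \<Rightarrow> 'l) \<Rightarrow> 'l" where
  "enat A E a1 q = E a1 (crep A E q)"

definition WL14 :: "('l::complete_lattice \<Rightarrow> 'l \<Rightarrow> 'l) \<Rightarrow> 'a set \<Rightarrow> 'i set
    \<Rightarrow> ('i \<Rightarrow> 'a \<Rightarrow> 'a \<Rightarrow> 'l) \<Rightarrow> ('a \<Rightarrow> 'a \<Rightarrow> 'l) \<Rightarrow> bool" where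
  "WL14 m A I V U \<longleftrightarrow> (\<forall>i\<in>I.
     rle A A (rcomp m A U (V i)) (rcomp m A (V i) U) \<and>
     rle A A (rcomp m A (rinv U) (V i)) (rcomp m A (V i) (rinv U)))"

definition WL23 :: "('l::complete_lattice \<Rightarrow> 'l \<Rightarrow> 'l) \<Rightarrow> 'p set \<Rightarrow> 'q set \<Rightarrow> 'i set
    \<Rightarrow> ('i \<Rightarrow> 'p \<Rightarrow> 'p \<Rightarrow> 'l) \<Rightarrow> ('i \<Rightarrow> 'q \<Rightarrow> 'q \<Rightarrow> 'l) \<Rightarrow> ('p \<Rightarrow> 'q \<Rightarrow> 'l) \<Rightarrow> bool" where
  "WL23 m P Q I V W U \<longleftrightarrow> (\<forall>i\<in>I.
     rle Q P (rcomp m P (rinv U) (V i)) (rcomp m Q (W i) (rinv U)) \<and>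
     rle P Q (rcomp m Q U (W i)) (rcomp m P (V i) U))"

definition WL25 :: "('l::complete_lattice \<Rightarrow> 'l \<Rightarrow> 'l) \<Rightarrow> 'p set \<Rightarrow> 'q set \<Rightarrow> 'i set
    \<Rightarrow> ('i \<Rightarrow> 'p \<Rightarrow> 'p \<Rightarrow> 'l) \<Rightarrow> ('i \<Rightarrow> 'q \<Rightarrow> 'q \<Rightarrow> 'l) \<Rightarrow> ('p \<Rightarrow> 'q \<Rightarrow> 'l) \<Rightarrow> bool" where
  "WL25 m P Q I V W U \<longleftrightarrow> (\<forall>i\<in>I. \<forall>x\<in>P. \<forall>t\<in>Q.
     rcomp m P (V i) U x t = rcomp m Q U (W i) x t)"

end

theory Submission
  imports Defs
begin

text \<open>Since \<open>E\<close> is reflexive and \<open>E \<circ> E = E\<close> on \<open>A\<close>, everything reduces to the relation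
  \<open>E \<circ> V\<^sub>i \<circ> E\<close>. Condition (i) says \<open>E \<circ> V\<^sub>i \<le> V\<^sub>i \<circ> E\<close>; composing with \<open>E\<close> on the right,
  and conversely using \<open>E \<circ> V\<^sub>i \<le> E \<circ> V\<^sub>i \<circ> E\<close>, this is equivalent to \<open>E \<circ> V\<^sub>i \<circ> E \<le> V\<^sub>i \<circ> E\<close>.
  Evaluated at classes \<open>E\<^sub>t\<close>, the compositions with \<open>E\<^sup>\<natural>\<close> and \<open>V\<^sub>i\<^sup>A\<^sup>/\<^sup>E\<close> become compositions
  on \<open>A\<close>: (ii) turns into the same inequality (its other half, \<open>E \<circ> V\<^sub>i \<le> E \<circ> V\<^sub>i \<circ> E\<close>, being
  automatic) and (iii) into \<open>V\<^sub>i \<circ> E = E \<circ> V\<^sub>i \<circ> E\<close>. As \<open>V\<^sub>i \<circ> E \<le> E \<circ> V\<^sub>i \<circ> E\<close> always holds,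
  (ii) and (iii) coincide.\<close>

lemma residuated_mult_mono:
  assumes "complete_residuated_lattice m r" "x \<le> x'" "y \<le> y'"
  shows "m x y \<le> m x' y'"
proof -
  have res: "\<And>x y z. m x y \<le> z \<longleftrightarrow> x \<le> r y z" and com: "\<And>x y. m x y = m y x"
    using assms(1) unfolding complete_residuated_lattice_def by auto
  have left: "\<And>a a' b. a \<le> a' \<Longrightarrow> m a b \<le> m a' b"
    by (metis res order_trans order_refl)
  show ?thesis
    using left[OF assms(2), of y] left[OF assms(3), of x'] com by (metis order_trans)
qed

lemma residuated_mult_SUP_left:
  assumes "complete_residuated_lattice m r"
  shows "m (SUP y\<in>Y. f y) z = (SUP y\<in>Y. m (f y) z)"
proof (rule antisym)
  have res: "\<And>x y z. m x y \<le> z \<longleftrightarrow> x \<le> r y z"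
    using assms unfolding complete_residuated_lattice_def by auto
  show "m (SUP y\<in>Y. f y) z \<le> (SUP y\<in>Y. m (f y) z)"
    unfolding res by (rule SUP_least) (metis res SUP_upper)
  show "(SUP y\<in>Y. m (f y) z) \<le> m (SUP y\<in>Y. f y) z"
    by (rule SUP_least) (rule residuated_mult_mono[OF assms], auto intro: SUP_upper)
qed

lemma residuated_mult_SUP_right:
  assumes "complete_residuated_lattice m r"
  shows "m z (SUP y\<in>Y. f y) = (SUP y\<in>Y. m z (f y))"
proof -
  have "\<And>x y. m x y = m y x"
    using assms unfolding complete_residuated_lattice_def by auto
  then show ?thesis using residuated_mult_SUP_left[OF assms, of f Y z] by simp
qed

lemma rcomp_assoc:
  assumes crl: "complete_residuated_lattice m r"
  shows "rcomp m B (rcomp m A R S) T = rcomp m A R (rcomp m B S T)"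
proof (intro ext)
  fix x t
  have assoc: "\<And>x y z. m (m x y) z = m x (m y z)"
    using crl unfolding complete_residuated_lattice_def by auto
  have "rcomp m B (rcomp m A R S) T x t = (SUP b\<in>B. SUP a\<in>A. m (m (R x a) (S a b)) (T b t))"
    unfolding rcomp_def by (simp add: residuated_mult_SUP_left[OF crl])
  also have "\<dots> = (SUP a\<in>A. SUP b\<in>B. m (R x a) (m (S a b) (T b t)))"
    by (subst SUP_commute) (simp add: assoc)
  also have "\<dots> = rcomp m A R (rcomp m B S T) x t"
    unfolding rcomp_def by (simp add: residuated_mult_SUP_right[OF crl])
  finally show "rcomp m B (rcomp m A R S) T x t = rcomp m A R (rcomp m B S T) x t" .
qed

lemma rcomp_cong_left:
  "(\<And>y. y \<in> Y \<Longrightarrow> R x y = R' x y) \<Longrightarrow> rcomp m Y R S x t = rcomp m Y R' S x t"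
  unfolding rcomp_def by simp

lemma rcomp_cong_right:
  "(\<And>y. y \<in> Y \<Longrightarrow> S y t = S' y t) \<Longrightarrow> rcomp m Y R S x t = rcomp m Y R S' x t"
  unfolding rcomp_def by simp

lemma rcomp_mono_left:
  assumes "complete_residuated_lattice m r" and "rle X Y R R'"
  shows "rle X Z (rcomp m Y R S) (rcomp m Y R' S)"
  using assms unfolding rle_def rcomp_def
  by (blast intro: SUP_mono residuated_mult_mono order_refl)

lemma fuzzy_equiv_rcomp_self:
  assumes crl: "complete_residuated_lattice m r" and fe: "fuzzy_equiv m A E"
    and x: "x \<in> A" and y: "y \<in> A"
  shows "rcomp m A E E x y = E x y"
proof (rule antisym)
  show "rcomp m A E E x y \<le> E x y"
    unfolding rcomp_def using fe x y unfolding fuzzy_equiv_def by (blast intro: SUP_least)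
  have "E x y = m (E x y) (E y y)"
    using crl fe y unfolding complete_residuated_lattice_def fuzzy_equiv_def by metis
  also have "\<dots> \<le> rcomp m A E E x y" unfolding rcomp_def using y by (rule SUP_upper)
  finally show "E x y \<le> rcomp m A E E x y" .
qed

lemma rcomp_fuzzy_equiv_right_ge:
  assumes "complete_residuated_lattice m r" and "fuzzy_equiv m A E" and t: "t \<in> A"
  shows "R x t \<le> rcomp m A R E x t"
proof -
  have "R x t = m (R x t) (E t t)"
    using assms unfolding complete_residuated_lattice_def fuzzy_equiv_def by metis
  also have "\<dots> \<le> rcomp m A R E x t" unfolding rcomp_def using t by (rule SUP_upper)
  finally show ?thesis .
qed

lemma rcomp_fuzzy_equiv_left_ge:
  assumes "complete_residuated_lattice m r" and "fuzzy_equiv m A E" and x: "x \<in> A"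
  shows "R x t \<le> rcomp m A E R x t"
proof -
  have "R x t = m (E x x) (R x t)"
    using assms unfolding complete_residuated_lattice_def fuzzy_equiv_def by metis
  also have "\<dots> \<le> rcomp m A E R x t" unfolding rcomp_def using x by (rule SUP_upper)
  finally show ?thesis .
qed

lemma rcomp_fuzzy_equiv_right_absorb:
  assumes crl: "complete_residuated_lattice m r" and fe: "fuzzy_equiv m A E" and t: "t \<in> A"
  shows "rcomp m A (rcomp m A R E) E x t = rcomp m A R E x t"
  unfolding rcomp_assoc[OF crl]
  by (rule rcomp_cong_right) (rule fuzzy_equiv_rcomp_self[OF crl fe _ t])

lemma rcomp_fuzzy_equiv_left_absorb:
  assumes crl: "complete_residuated_lattice m r" and fe: "fuzzy_equiv m A E" and x: "x \<in> A"
  shows "rcomp m A E (rcomp m A E R) x t = rcomp m A E R x t"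
  unfolding rcomp_assoc[OF crl, symmetric]
  by (rule rcomp_cong_left) (rule fuzzy_equiv_rcomp_self[OF crl fe x])

lemma rcomp_rinv_fuzzy_equiv:
  assumes fe: "fuzzy_equiv m A E" and x: "x \<in> A" and y: "y \<in> A"
  shows "rcomp m A (rinv E) V x y = rcomp m A E V x y"
    and "rcomp m A V (rinv E) x y = rcomp m A V E x y"
  using fe x y unfolding fuzzy_equiv_def rcomp_def rinv_def by (auto intro!: SUP_cong)

lemma fuzzy_equiv_commute_iff:
  assumes crl: "complete_residuated_lattice m r" and fe: "fuzzy_equiv m A E"
  shows "rle A A (rcomp m A E V) (rcomp m A V E)
     \<longleftrightarrow> rle A A (rcomp m A (rcomp m A E V) E) (rcomp m A V E)"
proof
  assume "rle A A (rcomp m A E V) (rcomp m A V E)"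
  then have "rle A A (rcomp m A (rcomp m A E V) E) (rcomp m A (rcomp m A V E) E)"
    by (rule rcomp_mono_left[OF crl])
  then show "rle A A (rcomp m A (rcomp m A E V) E) (rcomp m A V E)"
    unfolding rle_def using rcomp_fuzzy_equiv_right_absorb[OF crl fe, of _ V] by simp
next
  assume le: "rle A A (rcomp m A (rcomp m A E V) E) (rcomp m A V E)"
  show "rle A A (rcomp m A E V) (rcomp m A V E)"
    unfolding rle_def
  proof (intro ballI)
    fix x t assume "x \<in> A" "t \<in> A"
    then show "rcomp m A E V x t \<le> rcomp m A V E x t"
      using rcomp_fuzzy_equiv_right_ge[OF crl fe \<open>t \<in> A\<close>, of "rcomp m A E V" x] le
      unfolding rle_def by (blast intro: order_trans)
  qed
qed

lemma rcomp_fuzzy_equiv_both_ge: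
  assumes crl: "complete_residuated_lattice m r" and fe: "fuzzy_equiv m A E" and x: "x \<in> A"
  shows "rcomp m A V E x t \<le> rcomp m A (rcomp m A E V) E x t"
  using rcomp_fuzzy_equiv_left_ge[OF crl fe x] by (simp add: rcomp_assoc[OF crl])

lemma rle_rcomp_fuzzy_equiv_iff_eq:
  assumes crl: "complete_residuated_lattice m r" and fe: "fuzzy_equiv m A E"
  shows "rle A A (rcomp m A (rcomp m A E V) E) (rcomp m A V E)
     \<longleftrightarrow> (\<forall>x\<in>A. \<forall>t\<in>A. rcomp m A (rcomp m A E V) E x t = rcomp m A V E x t)"
  unfolding rle_def
proof (intro iffI ballI)
  fix x t assume le: "\<forall>x\<in>A. \<forall>t\<in>A. rcomp m A (rcomp m A E V) E x t \<le> rcomp m A V E x t"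
    and x: "x \<in> A" and t: "t \<in> A"
  show "rcomp m A (rcomp m A E V) E x t = rcomp m A V E x t"
    using le x t rcomp_fuzzy_equiv_both_ge[OF crl fe x, of V t] by (simp add: order.antisym)
qed simp

section \<open>The quotient system and the natural relation\<close>

lemma crep_eclass:
  assumes "a \<in> A"
  shows "crep A E (eclass A E a) \<in> A \<and> eclass A E (crep A E (eclass A E a)) = eclass A E a"
  unfolding crep_def by (rule someI2[of _ a]) (use assms in auto)

lemma fuzzy_equiv_crep_eclass:
  assumes fe: "fuzzy_equiv m A E" and a: "a \<in> A" and x: "x \<in> A"
  shows "E (crep A E (eclass A E a)) x = E a x" and "E x (crep A E (eclass A E a)) = E x a"
proof -
  note c = crep_eclass[OF a, of E]
  then have "eclass A E (crep A E (eclass A E a)) x = eclass A E a x" by metis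
  then show left: "E (crep A E (eclass A E a)) x = E a x" using x unfolding eclass_def by simp
  show "E x (crep A E (eclass A E a)) = E x a"
    using left fe c a x unfolding fuzzy_equiv_def by metis
qed

lemma enat_eclass:
  assumes "fuzzy_equiv m A E" and "x \<in> A" and "t \<in> A"
  shows "enat A E x (eclass A E t) = E x t"
  unfolding enat_def using fuzzy_equiv_crep_eclass(2)[OF assms(1,3,2)] .

lemma quot_rel_eclass:
  assumes crl: "complete_residuated_lattice m r" and fe: "fuzzy_equiv m A E"
    and a: "a \<in> A" and t: "t \<in> A"
  shows "quot_rel m A E V (eclass A E a) (eclass A E t) = rcomp m A (rcomp m A E V) E a t"
proof -
  have "rcomp m A (rcomp m A E V) E (crep A E (eclass A E a)) (crep A E (eclass A E t))
      = rcomp m A (rcomp m A E V) E (crep A E (eclass A E a)) t"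
    unfolding rcomp_def using fuzzy_equiv_crep_eclass(2)[OF fe t] by simp
  also have "\<dots> = rcomp m A (rcomp m A E V) E a t"
    unfolding rcomp_assoc[OF crl] rcomp_def using fuzzy_equiv_crep_eclass(1)[OF fe a] by simp
  finally show ?thesis unfolding quot_rel_def .
qed

lemma SUP_quot: "(SUP q\<in>quot A E. f q) = (SUP a\<in>A. f (eclass A E a))"
  unfolding quot_def by (simp add: image_comp)

lemma ball_quot: "(\<forall>q\<in>quot A E. P q) \<longleftrightarrow> (\<forall>t\<in>A. P (eclass A E t))"
  unfolding quot_def by blast

lemma rcomp_enat_quot_rel:
  assumes crl: "complete_residuated_lattice m r" and fe: "fuzzy_equiv m A E"
    and x: "x \<in> A" and t: "t \<in> A"
  shows "rcomp m (quot A E) (enat A E) (quot_rel m A E V) x (eclass A E t)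
       = rcomp m A (rcomp m A E V) E x t"
proof -
  have "rcomp m (quot A E) (enat A E) (quot_rel m A E V) x (eclass A E t)
      = (SUP a\<in>A. m (E x a) (rcomp m A (rcomp m A E V) E a t))"
    unfolding rcomp_def[of m "quot A E"] SUP_quot
    using enat_eclass[OF fe x] quot_rel_eclass[OF crl fe _ t] by simp
  also have "\<dots> = rcomp m A E (rcomp m A (rcomp m A E V) E) x t"
    by (simp only: rcomp_def[of m A E "rcomp m A (rcomp m A E V) E"])
  also have "\<dots> = rcomp m A (rcomp m A E V) E x t"
    by (simp only: rcomp_assoc[OF crl] rcomp_fuzzy_equiv_left_absorb[OF crl fe x])
  finally show ?thesis .
qed

lemma rcomp_quot_rel_rinv_enat:
  assumes crl: "complete_residuated_lattice m r" and fe: "fuzzy_equiv m A E"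
    and t: "t \<in> A" and x: "x \<in> A"
  shows "rcomp m (quot A E) (quot_rel m A E V) (rinv (enat A E)) (eclass A E t) x
       = rcomp m A (rcomp m A E V) E t x"
proof -
  have "rcomp m (quot A E) (quot_rel m A E V) (rinv (enat A E)) (eclass A E t) x
      = (SUP a\<in>A. m (rcomp m A (rcomp m A E V) E t a) (E a x))"
    unfolding rcomp_def[of m "quot A E"] SUP_quot rinv_def
    using enat_eclass[OF fe x] quot_rel_eclass[OF crl fe t] fe x
    unfolding fuzzy_equiv_def by simp
  also have "\<dots> = rcomp m A (rcomp m A (rcomp m A E V) E) E t x"
    by (simp only: rcomp_def[of m A "rcomp m A (rcomp m A E V) E" E])
  also have "\<dots> = rcomp m A (rcomp m A E V) E t x"
    by (rule rcomp_fuzzy_equiv_right_absorb[OF crl fe x])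
  finally show ?thesis .
qed

lemma rcomp_enat_right:
  assumes "fuzzy_equiv m A E" and "t \<in> A"
  shows "rcomp m A V (enat A E) x (eclass A E t) = rcomp m A V E x t"
  using enat_eclass[OF assms(1) _ assms(2)] by (simp add: rcomp_def)

lemma rcomp_rinv_enat_left:
  assumes fe: "fuzzy_equiv m A E" and t: "t \<in> A"
  shows "rcomp m A (rinv (enat A E)) V (eclass A E t) x = rcomp m A E V t x"
proof -
  have "\<And>a. a \<in> A \<Longrightarrow> enat A E a (eclass A E t) = E t a"
    using enat_eclass[OF fe _ t] fe t unfolding fuzzy_equiv_def by metis
  then show ?thesis unfolding rinv_def rcomp_def by simp
qed

section \<open>The three conditions in terms of \<open>E \<circ> V\<^sub>i \<circ> E\<close>\<close>

lemma WL14_fuzzy_equiv_iff: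
  assumes "fuzzy_equiv m A E"
  shows "WL14 m A I V E \<longleftrightarrow> (\<forall>i\<in>I. rle A A (rcomp m A E (V i)) (rcomp m A (V i) E))"
  unfolding WL14_def rle_def using rcomp_rinv_fuzzy_equiv[OF assms] by auto

lemma WL23_enat_iff:
  assumes crl: "complete_residuated_lattice m r" and fe: "fuzzy_equiv m A E"
  shows "WL23 m A (quot A E) I V (\<lambda>i. quot_rel m A E (V i)) (enat A E)
     \<longleftrightarrow> (\<forall>i\<in>I. rle A A (rcomp m A (rcomp m A E (V i)) E) (rcomp m A (V i) E))"
proof -
  have "(rcomp m A (rinv (enat A E)) (V i) (eclass A E t) x
          \<le> rcomp m (quot A E) (quot_rel m A E (V i)) (rinv (enat A E)) (eclass A E t) x
       \<and> rcomp m (quot A E) (enat A E) (quot_rel m A E (V i)) x (eclass A E t)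
          \<le> rcomp m A (V i) (enat A E) x (eclass A E t))
      \<longleftrightarrow> rcomp m A (rcomp m A E (V i)) E x t \<le> rcomp m A (V i) E x t"
    if x: "x \<in> A" and t: "t \<in> A" for i x t
    unfolding rcomp_enat_quot_rel[OF crl fe x t] rcomp_quot_rel_rinv_enat[OF crl fe t x]
      rcomp_enat_right[OF fe t] rcomp_rinv_enat_left[OF fe t]
    using rcomp_fuzzy_equiv_right_ge[OF crl fe x, of "rcomp m A E (V i)" t] by blast
  then show ?thesis unfolding WL23_def rle_def ball_quot by blast
qed

lemma WL25_enat_iff:
  assumes crl: "complete_residuated_lattice m r" and fe: "fuzzy_equiv m A E"
  shows "WL25 m A (quot A E) I V (\<lambda>i. quot_rel m A E (V i)) (enat A E)
     \<longleftrightarrow> (\<forall>i\<in>I. \<forall>x\<in>A. \<forall>t\<in>A. rcomp m A (rcomp m A E (V i)) E x t = rcomp m A (V i) E x t)"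
proof -
  have "(rcomp m A (V i) (enat A E) x (eclass A E t)
          = rcomp m (quot A E) (enat A E) (quot_rel m A E (V i)) x (eclass A E t))
      \<longleftrightarrow> rcomp m A (rcomp m A E (V i)) E x t = rcomp m A (V i) E x t"
    if x: "x \<in> A" and t: "t \<in> A" for i x t
    unfolding rcomp_enat_quot_rel[OF crl fe x t] rcomp_enat_right[OF fe t] by auto
  then show ?thesis unfolding WL25_def ball_quot by blast
qed

theorem theorem6p2:
  fixes m r :: "'l::complete_lattice \<Rightarrow> 'l \<Rightarrow> 'l"
    and A :: "'a set" and I :: "'i set"
    and V :: "'i \<Rightarrow> 'a \<Rightarrow> 'a \<Rightarrow> 'l" and E :: "'a \<Rightarrow> 'a \<Rightarrow> 'l"
  assumes "complete_residuated_lattice m r"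
    and "A \<noteq> {}" and "I \<noteq> {}"
    and "fuzzy_equiv m A E"
  shows "(WL14 m A I V E
            \<longleftrightarrow> WL23 m A (quot A E) I V (\<lambda>i. quot_rel m A E (V i)) (enat A E))
       \<and> (WL23 m A (quot A E) I V (\<lambda>i. quot_rel m A E (V i)) (enat A E)
            \<longleftrightarrow> WL25 m A (quot A E) I V (\<lambda>i. quot_rel m A E (V i)) (enat A E))"
proof -
  note crl = assms(1) and fe = assms(4)
  have "WL14 m A I V E
      \<longleftrightarrow> WL23 m A (quot A E) I V (\<lambda>i. quot_rel m A E (V i)) (enat A E)"
    by (simp only: WL14_fuzzy_equiv_iff[OF fe] WL23_enat_iff[OF crl fe]
        fuzzy_equiv_commute_iff[OF crl fe])
  moreover have "WL23 m A (quot A E) I V (\<lambda>i. quot_rel m A E (V i)) (enat A E)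
      \<longleftrightarrow> WL25 m A (quot A E) I V (\<lambda>i. quot_rel m A E (V i)) (enat A E)"
    by (simp only: WL23_enat_iff[OF crl fe] WL25_enat_iff[OF crl fe]
        rle_rcomp_fuzzy_equiv_iff_eq[OF crl fe])
  ultimately show ?thesis ..
qed

end
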